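(* Let $n$, $r$, $a$ be positive integers with $n=2r+1$ and $a\ge 2$. Then $$\rho_2(K(n+2a,r+a))\ \ge\ 2\,\rho_2(K(n,r)).$$
   Context: For integers $n\ge 2r$, the Kneser graph $K(n,r)$ has as vertices the $r$-element subsets of $[n]=\{1,\dots,n\}$, two vertices being adjacent iff they are disjoint. A $2$-packing of a graph $G$ is a set of vertices pairwise at distance at least $3$ in $G$; $\rho_2(G)$ is the maximum cardinality of a $2$-packing. *)

theory Defs
  imports Main
begin

(* A (simple) graph given by a vertex set V and a symmetric adjacency relation E. *)

fun walk_len :: "'a set \<Rightarrow> ('a \<Rightarrow> 'a \<Rightarrow> bool) \<Rightarrow> nat \<Rightarrow> 'a \<Rightarrow> 'a \<Rightarrow> bool" where
  "walk_len V E 0 u v \<longleftrightarrow> u \<in> V \<and> u = v"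
| "walk_len V E (Suc k) u v \<longleftrightarrow> (\<exists>w. u \<in> V \<and> E u w \<and> walk_len V E k w v)"

(* distance at least d: no walk of length < d between u and v
   (also covers disconnected pairs, whose distance is infinite) *)
definition dist_ge :: "'a set \<Rightarrow> ('a \<Rightarrow> 'a \<Rightarrow> bool) \<Rightarrow> nat \<Rightarrow> 'a \<Rightarrow> 'a \<Rightarrow> bool" where
  "dist_ge V E d u v \<longleftrightarrow> (\<forall>k<d. \<not> walk_len V E k u v)"

definition two_packing :: "'a set \<Rightarrow> ('a \<Rightarrow> 'a \<Rightarrow> bool) \<Rightarrow> 'a set \<Rightarrow> bool" where
  "two_packing V E P \<longleftrightarrow> P \<subseteq> V \<and> (\<forall>u\<in>P. \<forall>v\<in>P. u \<noteq> v \<longrightarrow> dist_ge V E 3 u v)"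

definition rho2 :: "'a set \<Rightarrow> ('a \<Rightarrow> 'a \<Rightarrow> bool) \<Rightarrow> nat" where
  "rho2 V E = Max (card ` {P. two_packing V E P})"

definition kneser_V :: "nat \<Rightarrow> nat \<Rightarrow> nat set set" where
  "kneser_V n r = {A. A \<subseteq> {1..n} \<and> card A = r}"

definition kneser_E :: "nat set \<Rightarrow> nat set \<Rightarrow> bool" where
  "kneser_E A B \<longleftrightarrow> A \<inter> B = {}"

definition rho2_kneser :: "nat \<Rightarrow> nat \<Rightarrow> nat" where
  "rho2_kneser n r = rho2 (kneser_V n r) kneser_E"

end

theory Submission
  imports Defs
begin

text \<open>In a Kneser graph two distinct vertices A, B are at distance at least 3 iff they meet and
  have no common neighbour, i.e. the complement of A \<union> B is too small to contain a vertex.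
  If P is a 2-packing of K(n,r), extending every member of P once by the block
  X = {n+1..n+a} and once by Y = {n+a+1..n+2a} gives 2|P| vertices of K(n+2a,r+a).
  For two of them the complement of their union consists of the complement of A \<union> B in [n]
  together with X or Y if the same block was used, and is empty outside [n] otherwise; the
  only new case, the two extensions A \<union> X and A \<union> Y of one set, has complement [n] - A of
  size n - r, which is smaller than r + a as soon as n < 2r + a.\<close>

lemma dist_ge_3_iff:
  "dist_ge V E 3 u v \<longleftrightarrow>
     \<not> (u \<in> V \<and> u = v) \<and> \<not> (u \<in> V \<and> E u v \<and> v \<in> V) \<and>
     \<not> (\<exists>w. u \<in> V \<and> E u w \<and> w \<in> V \<and> E w v \<and> v \<in> V)"
  unfolding dist_ge_def numeral_3_eq_3 less_Suc_eq by (auto simp: numeral_2_eq_2)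

lemma finite_two_packings:
  assumes "finite V"
  shows "finite {P. two_packing V E P}"
proof (rule finite_subset)
  show "{P. two_packing V E P} \<subseteq> Pow V"
    by (auto simp: two_packing_def)
  show "finite (Pow V)"
    using assms by simp
qed

lemma rho2_attained:
  assumes "finite V"
  obtains P where "two_packing V E P" "card P = rho2 V E"
proof -
  have "two_packing V E {}"
    by (simp add: two_packing_def)
  then have "rho2 V E \<in> card ` {P. two_packing V E P}"
    unfolding rho2_def using finite_two_packings[OF assms] by (intro Max_in) auto
  then show thesis
    using that by auto
qed

lemma card_le_rho2:
  assumes "finite V" "two_packing V E P"
  shows "card P \<le> rho2 V E"
  unfolding rho2_def using assms finite_two_packings[OF assms(1)] by (intro Max_ge) auto

lemma finite_kneser_V: "finite (kneser_V n r)"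
proof (rule finite_subset)
  show "kneser_V n r \<subseteq> Pow {1..n}"
    by (auto simp: kneser_V_def)
qed simp

lemma kneser_dist_ge_3_iff:
  assumes A: "A \<in> kneser_V n r" and B: "B \<in> kneser_V n r" and "A \<noteq> B"
  shows "dist_ge (kneser_V n r) kneser_E 3 A B \<longleftrightarrow>
           A \<inter> B \<noteq> {} \<and> card ({1..n} - (A \<union> B)) < r"
proof -
  have common_neighbour_iff:
    "(\<exists>C \<in> kneser_V n r. kneser_E A C \<and> kneser_E C B) \<longleftrightarrow> r \<le> card ({1..n} - (A \<union> B))"
  proof
    assume "\<exists>C \<in> kneser_V n r. kneser_E A C \<and> kneser_E C B"
    then obtain C where "C \<subseteq> {1..n} - (A \<union> B)" "card C = r"
      by (auto simp: kneser_V_def kneser_E_def)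
    then show "r \<le> card ({1..n} - (A \<union> B))"
      by (metis card_mono finite_Diff finite_atLeastAtMost)
  next
    assume "r \<le> card ({1..n} - (A \<union> B))"
    then obtain C where "C \<subseteq> {1..n} - (A \<union> B)" "card C = r"
      by (meson finite_Diff finite_atLeastAtMost obtain_subset_with_card_n)
    then show "\<exists>C \<in> kneser_V n r. kneser_E A C \<and> kneser_E C B"
      by (intro bexI[of _ C]) (auto simp: kneser_V_def kneser_E_def)
  qed
  have "dist_ge (kneser_V n r) kneser_E 3 A B \<longleftrightarrow>
          \<not> kneser_E A B \<and> \<not> (\<exists>C \<in> kneser_V n r. kneser_E A C \<and> kneser_E C B)"
    unfolding dist_ge_3_iff using A B \<open>A \<noteq> B\<close> by blast
  then show ?thesis
    unfolding common_neighbour_iff by (auto simp: kneser_E_def)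
qed

lemma two_packing_kneser_iff:
  "two_packing (kneser_V n r) kneser_E P \<longleftrightarrow>
     P \<subseteq> kneser_V n r \<and>
     (\<forall>A\<in>P. \<forall>B\<in>P. A \<noteq> B \<longrightarrow> A \<inter> B \<noteq> {} \<and> card ({1..n} - (A \<union> B)) < r)"
  unfolding two_packing_def by (meson kneser_dist_ge_3_iff subsetD)

lemma card_complement_Un_blocks:
  fixes n m :: nat
  assumes "A \<subseteq> {1..n}" "B \<subseteq> {1..n}" "S \<subseteq> {n<..m}" "S' \<subseteq> {n<..m}" "n \<le> m"
  shows "card ({1..m} - (A \<union> S \<union> (B \<union> S'))) =
           card ({1..n} - (A \<union> B)) + card ({n<..m} - (S \<union> S'))"
proof -
  have "{1..m} - (A \<union> S \<union> (B \<union> S')) = ({1..n} - (A \<union> B)) \<union> ({n<..m} - (S \<union> S'))"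
    using assms by (auto simp: subset_iff)
  moreover have "({1..n} - (A \<union> B)) \<inter> ({n<..m} - (S \<union> S')) = {}"
    by auto
  ultimately show ?thesis
    by (simp add: card_Un_disjoint)
qed

definition kneser_blocks :: "nat \<Rightarrow> nat \<Rightarrow> nat set set" where
  "kneser_blocks n a = {{n<..n+a}, {n+a<..n+2*a}}"

definition kneser_doubling :: "nat \<Rightarrow> nat \<Rightarrow> nat set set \<Rightarrow> nat set set" where
  "kneser_doubling n a P = (\<lambda>(A, S). A \<union> S) ` (P \<times> kneser_blocks n a)"

lemma kneser_blocks_subset:
  assumes "S \<in> kneser_blocks n a"
  shows "S \<subseteq> {n<..n+2*a}" "card S = a"
  using assms by (auto simp: kneser_blocks_def)

lemma card_kneser_blocks:
  assumes "0 < a"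
  shows "card (kneser_blocks n a) = 2"
proof -
  have "n + a \<in> {n<..n+a}" "n + a \<notin> {n+a<..n+2*a}"
    using assms by auto
  then have "{n<..n+a} \<noteq> {n+a<..n+2*a}"
    by blast
  then show ?thesis
    by (simp add: kneser_blocks_def)
qed

lemma card_complement_kneser_blocks:
  assumes "S \<in> kneser_blocks n a" "S' \<in> kneser_blocks n a"
  shows "card ({n<..n+2*a} - (S \<union> S')) = (if S = S' then a else 0)"
proof -
  have "{n<..n+2*a} - {n<..n+a} = {n+a<..n+2*a}" "{n<..n+2*a} - {n+a<..n+2*a} = {n<..n+a}"
    by auto
  then show ?thesis
    using assms by (auto simp: kneser_blocks_def)
qed

lemma kneser_V_Un_block:
  assumes "A \<in> kneser_V n r" "S \<in> kneser_blocks n a"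
  shows "A \<union> S \<in> kneser_V (n + 2 * a) (r + a)"
proof -
  have A: "A \<subseteq> {1..n}" "finite A" "card A = r"
    using assms(1) finite_subset[of A "{1..n}"] by (auto simp: kneser_V_def)
  have S: "S \<subseteq> {n<..n+2*a}" "finite S" "card S = a"
    using kneser_blocks_subset[OF assms(2)] finite_subset by auto
  have "{1..n} \<inter> {n<..n + 2 * a} = {}" "{1..n} \<union> {n<..n + 2 * a} \<subseteq> {1..n + 2 * a}"
    by auto
  then have "A \<inter> S = {}" "A \<union> S \<subseteq> {1..n + 2 * a}"
    using A(1) S(1) by blast+
  then show ?thesis
    using A S by (simp add: kneser_V_def card_Un_disjoint)
qed

lemma card_kneser_doubling:
  assumes "P \<subseteq> kneser_V n r" "0 < a"
  shows "card (kneser_doubling n a P) = 2 * card P"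
proof -
  have "finite P"
    using assms(1) finite_kneser_V by (rule finite_subset)
  have "inj_on (\<lambda>(A, S). A \<union> S) (P \<times> kneser_blocks n a)"
  proof (rule inj_onI, clarify)
    fix A S B S'
    assume "A \<in> P" "B \<in> P" "S \<in> kneser_blocks n a" "S' \<in> kneser_blocks n a"
      and eq: "A \<union> S = B \<union> S'"
    then have "A \<subseteq> {1..n}" "B \<subseteq> {1..n}" "S \<inter> {1..n} = {}" "S' \<inter> {1..n} = {}"
      using assms(1) by (auto simp: kneser_V_def kneser_blocks_def)
    then show "A = B \<and> S = S'"
      using eq by blast
  qed
  then show ?thesis
    unfolding kneser_doubling_def using \<open>finite P\<close> card_kneser_blocks[OF assms(2)]
    by (simp add: card_image card_cartesian_product)
qed

lemma kneser_doubling_separated: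
  assumes P: "two_packing (kneser_V n r) kneser_E P" and "0 < r" "0 < a" "n < 2 * r + a"
    and "A \<in> P" "B \<in> P" "S \<in> kneser_blocks n a" "S' \<in> kneser_blocks n a"
    and "A \<union> S \<noteq> B \<union> S'"
  shows "(A \<union> S) \<inter> (B \<union> S') \<noteq> {} \<and>
         card ({1..n + 2 * a} - (A \<union> S \<union> (B \<union> S'))) < r + a"
proof -
  have A: "A \<subseteq> {1..n}" "finite A" "card A = r" and B: "B \<subseteq> {1..n}"
    using P \<open>A \<in> P\<close> \<open>B \<in> P\<close> finite_subset[of A "{1..n}"]
    by (auto simp: two_packing_def kneser_V_def)
  have "card ({1..n + 2 * a} - (A \<union> S \<union> (B \<union> S'))) =
      card ({1..n} - (A \<union> B)) + card ({n<..n+2*a} - (S \<union> S'))" (is "?complement = _")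
    using A(1) B kneser_blocks_subset(1) assms(7,8) by (intro card_complement_Un_blocks) auto
  also have "\<dots> = card ({1..n} - (A \<union> B)) + (if S = S' then a else 0)"
    using card_complement_kneser_blocks assms(7,8) by simp
  finally have complement: "?complement = card ({1..n} - (A \<union> B)) + (if S = S' then a else 0)" .
  have packed: "A \<inter> B \<noteq> {} \<and> card ({1..n} - (A \<union> B)) < r" if "A \<noteq> B"
    using P that \<open>A \<in> P\<close> \<open>B \<in> P\<close> by (auto simp: two_packing_kneser_iff)
  consider "A \<noteq> B" "S = S'" | "A \<noteq> B" "S \<noteq> S'" | "A = B" "S \<noteq> S'"
    using \<open>A \<union> S \<noteq> B \<union> S'\<close> by blast
  then show ?thesis
  proof cases
    case 1
    moreover have "S \<noteq> {}"
      using kneser_blocks_subset(2)[OF \<open>S \<in> kneser_blocks n a\<close>] \<open>0 < a\<close> by auto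
    ultimately show ?thesis
      using packed complement by auto
  next
    case 2
    then show ?thesis
      using packed complement by auto
  next
    case 3
    moreover have "A \<noteq> {}" "card ({1..n} - A) = n - r"
      using A \<open>0 < r\<close> by (auto simp: card_Diff_subset)
    ultimately show ?thesis
      using complement \<open>n < 2 * r + a\<close> by auto
  qed
qed

lemma two_packing_kneser_doubling:
  assumes P: "two_packing (kneser_V n r) kneser_E P" and "0 < r" "0 < a" "n < 2 * r + a"
  shows "two_packing (kneser_V (n + 2 * a) (r + a)) kneser_E (kneser_doubling n a P)"
proof -
  have member: "U \<in> kneser_doubling n a P \<longleftrightarrow> (\<exists>A\<in>P. \<exists>S\<in>kneser_blocks n a. U = A \<union> S)" for U
    unfolding kneser_doubling_def by auto
  have "kneser_doubling n a P \<subseteq> kneser_V (n + 2 * a) (r + a)"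
  proof
    fix U
    assume "U \<in> kneser_doubling n a P"
    then obtain A S where "A \<in> P" "S \<in> kneser_blocks n a" "U = A \<union> S"
      using member[of U] by auto
    then show "U \<in> kneser_V (n + 2 * a) (r + a)"
      using P kneser_V_Un_block by (auto simp: two_packing_def)
  qed
  moreover have "U \<inter> W \<noteq> {} \<and> card ({1..n + 2 * a} - (U \<union> W)) < r + a"
    if U: "U \<in> kneser_doubling n a P" and W: "W \<in> kneser_doubling n a P" and "U \<noteq> W"
    for U W
  proof -
    obtain A S where "A \<in> P" "S \<in> kneser_blocks n a" "U = A \<union> S"
      using member[of U] U by auto
    moreover obtain B S' where "B \<in> P" "S' \<in> kneser_blocks n a" "W = B \<union> S'"
      using member[of W] W by auto
    ultimately show ?thesis
      using kneser_doubling_separated[OF assms] \<open>U \<noteq> W\<close> by simp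
  qed
  ultimately show ?thesis
    unfolding two_packing_kneser_iff by blast
qed

theorem proposition4p3:
  fixes n r a :: nat
  assumes "r > 0" and "n = 2 * r + 1" and "a \<ge> 2"
  shows "rho2_kneser (n + 2 * a) (r + a) \<ge> 2 * rho2_kneser n r"
proof -
  obtain P where P: "two_packing (kneser_V n r) kneser_E P" and "card P = rho2_kneser n r"
    using rho2_attained[OF finite_kneser_V] unfolding rho2_kneser_def by metis
  have "P \<subseteq> kneser_V n r"
    using P by (simp add: two_packing_def)
  then have "2 * card P = card (kneser_doubling n a P)"
    using \<open>a \<ge> 2\<close> by (simp add: card_kneser_doubling)
  also have "\<dots> \<le> rho2_kneser (n + 2 * a) (r + a)"
    unfolding rho2_kneser_def using assms
    by (intro card_le_rho2 finite_kneser_V two_packing_kneser_doubling[OF P]) auto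
  finally show ?thesis
    using \<open>card P = rho2_kneser n r\<close> by simp
qed

end
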